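(* Let $l,r$ be positive integers. For every $n\ge r$, the sequence $k\mapsto\mathcal{A}_r^{(l)}(n,k)$ is log-concave (and hence unimodal).
   Context: A subexceedant function on $[n]$ is a map $f:[n]\to[n]$ with $1\le f(i)\le i$ for all $i$. Its block leader set is $\mathrm{bl}(f)=\{i\in[n]: f(i)\notin f(\{1,\dots,i-1\})\}$. For positive integers $l,r$, $\mathcal{A}_r^{(l)}(n,k)$ is the number of $l$-tuples $(f_1,\dots,f_l)$ of subexceedant functions on $[n]$ such that $\{1,\dots,r\}\subseteq\mathrm{bl}(f_1)$, $|\mathrm{bl}(f_1)|=k+1$, and $\mathrm{bl}(f_1)=\cdots=\mathrm{bl}(f_l)$. A sequence $(a_k)$ is log-concave if $a_k^2\ge a_{k-1}a_{k+1}$ for all $k$. *)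

theory Defs
  imports Main
begin

text \<open>Subexceedant functions on [n] = {1..n}, represented as functions nat => nat
  that are 0 outside {1..n} (so the set is finite).\<close>
definition subexc :: "nat \<Rightarrow> (nat \<Rightarrow> nat) set" where
  "subexc n = {f. (\<forall>i\<in>{1..n}. 1 \<le> f i \<and> f i \<le> i) \<and> (\<forall>i. i \<notin> {1..n} \<longrightarrow> f i = 0)}"

definition bl :: "nat \<Rightarrow> (nat \<Rightarrow> nat) \<Rightarrow> nat set" where
  "bl n f = {i\<in>{1..n}. f i \<notin> f ` {1..<i}}"

definition A :: "nat \<Rightarrow> nat \<Rightarrow> nat \<Rightarrow> nat \<Rightarrow> nat" where
  "A r l n k = card {fs. length fs = l \<and> (\<forall>f\<in>set fs. f \<in> subexc n)
      \<and> {1..r} \<subseteq> bl n (hd fs) \<and> card (bl n (hd fs)) = k + 1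
      \<and> (\<forall>f\<in>set fs. bl n f = bl n (hd fs))}"

end

theory Submission
  imports Defs Complex_Main
begin

(* Record the block leader set S of a subexceedant function on [n] by the word whose i-th letter
  says whether i is a leader.  If a of the positions 1, ..., i - 1 are leaders, then a leader at i
  has i - a possible values and a non-leader a values, so the number of functions with leader set S
  is a product of such factors, and A(n, k) is a sum of l-th powers of these products over the
  words of length n - r with k + 1 - r ones that follow the forced prefix of r ones.

  Log-concavity comes from an injection from pairs of words with j + 2 and j ones into pairs of
  words with j + 1 ones each: exchange the tails after the last position where the first word leads
  the second by exactly one.  The product of the weights does not decrease, because the factor by
  which the weight of a tail changes when its starting state (a, b) is replaced by (a - 1, b + 1)
  only grows when ones are moved to earlier positions; this is shown with a potential function. *)

section \<open>Block leader sets and fibres\<close>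

lemma bl_subset: "bl n f \<subseteq> {1..n}"
  by (auto simp: bl_def)

lemma bl_cong: "(\<And>i. i \<in> {1..n} \<Longrightarrow> f i = g i) \<Longrightarrow> bl n f = bl n g"
proof -
  assume eq: "\<And>i. i \<in> {1..n} \<Longrightarrow> f i = g i"
  have "f ` {1..<i} = g ` {1..<i}" if "i \<le> n" for i
    using eq that by (intro image_cong) auto
  then show ?thesis
    using eq by (auto simp: bl_def)
qed

lemma bl_Suc: "bl (Suc n) f = bl n f \<union> (if f (Suc n) \<in> f ` {1..n} then {} else {Suc n})"
proof -
  have "{1..<Suc n} = {1..n}"
    by auto
  then show ?thesis
    by (auto simp: bl_def le_Suc_eq)
qed

lemma card_image_eq_card_bl: "card (f ` {1..n}) = card (bl n f)"
proof (induction n)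
  case 0
  then show ?case by (simp add: bl_def)
next
  case (Suc n)
  have "f ` {1..Suc n} = insert (f (Suc n)) (f ` {1..n})"
    by (simp add: atLeastAtMostSuc_conv)
  moreover have "Suc n \<notin> bl n f" "finite (bl n f)"
    using bl_subset[of n f] finite_subset by fastforce+
  ultimately show ?case
    using Suc.IH by (auto simp: bl_Suc insert_absorb)
qed

lemma finite_subexc: "finite (subexc n)"
proof (rule finite_subset)
  show "subexc n \<subseteq> {f. \<forall>i. (i \<in> {1..n} \<longrightarrow> f i \<in> {0..n}) \<and> (i \<notin> {1..n} \<longrightarrow> f i = 0)}"
    by (auto simp: subexc_def intro: order.trans)
  show "finite {f. \<forall>i. (i \<in> {1..n} \<longrightarrow> f i \<in> {0..n}) \<and> (i \<notin> {1..n} \<longrightarrow> f i = (0::nat))}"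
    by (rule finite_set_of_finite_funs) auto
qed

lemma card_subexc_Suc:
  "card {g \<in> subexc (Suc n). P g} = (\<Sum>f\<in>subexc n. card {v \<in> {1..Suc n}. P (f(Suc n := v))})"
proof -
  have "bij_betw (\<lambda>(f, v). f(Suc n := v))
      (SIGMA f:subexc n. {v \<in> {1..Suc n}. P (f(Suc n := v))}) {g \<in> subexc (Suc n). P g}"
  proof (rule bij_betw_byWitness[where f' = "\<lambda>g. (g(Suc n := 0), g (Suc n))"])
    show "\<forall>x\<in>SIGMA f:subexc n. {v \<in> {1..Suc n}. P (f(Suc n := v))}.
        (\<lambda>g. (g(Suc n := 0), g (Suc n))) ((\<lambda>(f, v). f(Suc n := v)) x) = x"
      by (auto simp: subexc_def fun_eq_iff)
    show "\<forall>g\<in>{g \<in> subexc (Suc n). P g}. (\<lambda>(f, v). f(Suc n := v)) (g(Suc n := 0), g (Suc n)) = g"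
      by simp
    show "(\<lambda>(f, v). f(Suc n := v)) ` (SIGMA f:subexc n. {v \<in> {1..Suc n}. P (f(Suc n := v))})
        \<subseteq> {g \<in> subexc (Suc n). P g}"
      by (auto simp: subexc_def le_Suc_eq)
    show "(\<lambda>g. (g(Suc n := 0), g (Suc n))) ` {g \<in> subexc (Suc n). P g}
        \<subseteq> (SIGMA f:subexc n. {v \<in> {1..Suc n}. P (f(Suc n := v))})"
      by (auto simp: subexc_def)
  qed
  then have "card {g \<in> subexc (Suc n). P g}
      = card (SIGMA f:subexc n. {v \<in> {1..Suc n}. P (f(Suc n := v))})"
    by (simp add: bij_betw_same_card)
  also have "\<dots> = (\<Sum>f\<in>subexc n. card {v \<in> {1..Suc n}. P (f(Suc n := v))})"
    using finite_subexc by (intro card_SigmaI) auto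
  finally show ?thesis .
qed

lemma card_extension_values:
  assumes "f \<in> subexc n"
  shows "card {v \<in> {1..Suc n}. (v \<notin> f ` {1..n}) = s}
    = (if s then Suc n - card (bl n f) else card (bl n f))"
proof -
  have sub: "f ` {1..n} \<subseteq> {1..Suc n}"
    using assms by (auto simp: subexc_def)
  show ?thesis
  proof (cases s)
    case True
    then have "{v \<in> {1..Suc n}. (v \<notin> f ` {1..n}) = s} = {1..Suc n} - f ` {1..n}"
      by auto
    then show ?thesis
      using True sub card_image_eq_card_bl[of f n] by (simp add: card_Diff_subset)
  next
    case False
    then have "{v \<in> {1..Suc n}. (v \<notin> f ` {1..n}) = s} = f ` {1..n}"
      using sub by auto
    then show ?thesis
      using False card_image_eq_card_bl[of f n] by simp
  qed
qed

definition fibre :: "nat \<Rightarrow> nat set \<Rightarrow> (nat \<Rightarrow> nat) set" where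
  "fibre n S = {f \<in> subexc n. bl n f = S}"

lemma finite_fibre: "finite (fibre n S)"
  using finite_subexc by (simp add: fibre_def)

lemma bl_update_Suc:
  "bl (Suc n) (f(Suc n := v)) = bl n f \<union> (if v \<in> f ` {1..n} then {} else {Suc n})"
proof -
  have "(f(Suc n := v)) ` {1..n} = f ` {1..n}"
    by (intro image_cong) auto
  then show ?thesis
    using bl_Suc[of n "f(Suc n := v)"] bl_cong[of n "f(Suc n := v)" f] by simp
qed

lemma card_fibre_Suc:
  assumes S: "S \<subseteq> {1..n}"
  shows "card (fibre (Suc n) (S \<union> (if s then {Suc n} else {})))
    = (if s then Suc n - card S else card S) * card (fibre n S)"
proof -
  define c where "c = (if s then Suc n - card S else card S)"
  have extend: "{v \<in> {1..Suc n}. bl (Suc n) (f(Suc n := v)) = S \<union> (if s then {Suc n} else {})}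
      = (if bl n f = S then {v \<in> {1..Suc n}. (v \<notin> f ` {1..n}) = s} else {})" for f
  proof -
    have "Suc n \<notin> bl n f" "Suc n \<notin> S"
      using bl_subset[of n f] S by auto
    then have "bl n f \<union> (if v \<in> f ` {1..n} then {} else {Suc n}) = S \<union> (if s then {Suc n} else {})
        \<longleftrightarrow> bl n f = S \<and> (v \<notin> f ` {1..n}) = s" for v
      by (auto simp: insert_ident split: if_splits)
    then show ?thesis
      by (auto simp: bl_update_Suc)
  qed
  have "card (fibre (Suc n) (S \<union> (if s then {Suc n} else {})))
      = (\<Sum>f\<in>subexc n.
          card {v \<in> {1..Suc n}. bl (Suc n) (f(Suc n := v)) = S \<union> (if s then {Suc n} else {})})"
    unfolding fibre_def by (rule card_subexc_Suc)
  also have "\<dots> = (\<Sum>f\<in>subexc n. if bl n f = S then c else 0)"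
  proof (rule sum.cong[OF refl])
    fix f
    assume "f \<in> subexc n"
    then show "card {v \<in> {1..Suc n}. bl (Suc n) (f(Suc n := v)) = S \<union> (if s then {Suc n} else {})}
        = (if bl n f = S then c else 0)"
      unfolding extend using card_extension_values[of f n s] by (simp add: c_def)
  qed
  also have "\<dots> = c * card (fibre n S)"
    by (simp add: sum.inter_filter[symmetric] finite_subexc fibre_def)
  finally show ?thesis
    by (simp add: c_def)
qed

section \<open>Leader words\<close>

abbreviation trues :: "bool list \<Rightarrow> nat" where
  "trues \<sigma> \<equiv> count_list \<sigma> True"

abbreviation falses :: "bool list \<Rightarrow> nat" where
  "falses \<sigma> \<equiv> count_list \<sigma> False"

lemma trues_plus_falses: "trues \<sigma> + falses \<sigma> = length \<sigma>"
  by (induction \<sigma>) auto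

lemma trues_replicate_True [simp]: "trues (replicate r True) = r"
  by (induction r) auto

(* In the state (a, b) before position i, a values out of {1..i} are used and b = i - a are not;
  a leader at i takes one of the b unused values, a non-leader one of the a used ones. *)
fun weight :: "nat \<Rightarrow> nat \<Rightarrow> bool list \<Rightarrow> nat" where
  "weight a b [] = 1"
| "weight a b (s # \<sigma>) = (if s then b * weight (Suc a) b \<sigma> else a * weight a (Suc b) \<sigma>)"

lemma weight_append:
  "weight a b (\<sigma> @ \<tau>) = weight a b \<sigma> * weight (a + trues \<sigma>) (b + falses \<sigma>) \<tau>"
  by (induction \<sigma> arbitrary: a b) auto

lemma weight_replicate_True: "weight a b (replicate r True) = b ^ r"
  by (induction r arbitrary: a) auto

definition bit_lists :: "nat \<Rightarrow> nat \<Rightarrow> bool list set" where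
  "bit_lists L j = {\<sigma>. length \<sigma> = L \<and> trues \<sigma> = j}"

lemma finite_bit_lists: "finite (bit_lists L j)"
  by (rule finite_subset[OF _ finite_lists_length_eq[of UNIV L]]) (auto simp: bit_lists_def)

definition leader_set :: "bool list \<Rightarrow> nat set" where
  "leader_set \<tau> = {i \<in> {1..length \<tau>}. \<tau> ! (i - 1)}"

lemma leader_set_subset: "leader_set \<tau> \<subseteq> {1..length \<tau>}"
  by (auto simp: leader_set_def)

lemma Suc_mem_leader_set: "Suc i \<in> leader_set \<tau> \<longleftrightarrow> i < length \<tau> \<and> \<tau> ! i"
  by (auto simp: leader_set_def)

lemma leader_set_snoc:
  "leader_set (\<tau> @ [s]) = leader_set \<tau> \<union> (if s then {Suc (length \<tau>)} else {})"
  by (auto simp: leader_set_def nth_append le_Suc_eq)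

lemma card_leader_set: "card (leader_set \<tau>) = trues \<tau>"
proof (induction \<tau> rule: rev_induct)
  case (snoc s \<tau>)
  have "Suc (length \<tau>) \<notin> leader_set \<tau>" "finite (leader_set \<tau>)"
    using leader_set_subset[of \<tau>] finite_subset by fastforce+
  then show ?case
    using snoc.IH by (simp add: leader_set_snoc)
qed (simp add: leader_set_def)

lemma card_fibre_leader_set: "card (fibre (length \<tau>) (leader_set \<tau>)) = weight 0 1 \<tau>"
proof (induction \<tau> rule: rev_induct)
  case Nil
  have "subexc 0 = {\<lambda>_. 0}"
    by (auto simp: subexc_def)
  then show ?case
    by (simp add: fibre_def leader_set_def bl_def)
next
  case (snoc s \<tau>)
  have "card (fibre (length (\<tau> @ [s])) (leader_set (\<tau> @ [s])))
      = (if s then Suc (length \<tau>) - trues \<tau> else trues \<tau>) * weight 0 1 \<tau>"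
    using card_fibre_Suc[OF leader_set_subset, of \<tau> s] snoc.IH
    by (simp add: leader_set_snoc card_leader_set)
  also have "\<dots> = weight 0 1 (\<tau> @ [s])"
  proof -
    have "Suc (length \<tau>) - trues \<tau> = Suc (falses \<tau>)"
      using trues_plus_falses[of \<tau>] by linarith
    then show ?thesis
      by (simp add: weight_append)
  qed
  finally show ?case .
qed

definition leader_sets :: "nat \<Rightarrow> nat \<Rightarrow> nat \<Rightarrow> nat set set" where
  "leader_sets n r k = {S. S \<subseteq> {1..n} \<and> {1..r} \<subseteq> S \<and> card S = k + 1}"

lemma finite_leader_sets: "finite (leader_sets n r k)"
  by (rule finite_subset[of _ "Pow {1..n}"]) (auto simp: leader_sets_def)

lemma A_eq_sum_fibres:
  assumes "0 < l"
  shows "A r l n k = (\<Sum>S\<in>leader_sets n r k. card (fibre n S) ^ l)"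
proof -
  define F where "F = {fs. length fs = l \<and> (\<forall>f\<in>set fs. f \<in> subexc n)
      \<and> {1..r} \<subseteq> bl n (hd fs) \<and> card (bl n (hd fs)) = k + 1
      \<and> (\<forall>f\<in>set fs. bl n f = bl n (hd fs))}"
  have "finite F"
    by (rule finite_subset[OF _ finite_lists_length_eq[OF finite_subexc, of n l]])
      (auto simp: F_def)
  moreover have "(\<lambda>fs. bl n (hd fs)) ` F \<subseteq> leader_sets n r k"
    using bl_subset by (auto simp: F_def leader_sets_def)
  ultimately have "card F = (\<Sum>S\<in>leader_sets n r k. card {fs \<in> F. bl n (hd fs) = S})"
    using sum.group[of F "leader_sets n r k" "\<lambda>fs. bl n (hd fs)" "\<lambda>_. 1::nat"] finite_leader_sets
    by simp
  also have "\<dots> = (\<Sum>S\<in>leader_sets n r k. card {fs. set fs \<subseteq> fibre n S \<and> length fs = l})"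
  proof (rule sum.cong[OF refl])
    fix S
    assume S: "S \<in> leader_sets n r k"
    have "{fs \<in> F. bl n (hd fs) = S} = {fs. set fs \<subseteq> fibre n S \<and> length fs = l}"
    proof (intro set_eqI iffI)
      fix fs
      assume "fs \<in> {fs \<in> F. bl n (hd fs) = S}"
      then show "fs \<in> {fs. set fs \<subseteq> fibre n S \<and> length fs = l}"
        by (auto simp: F_def fibre_def)
    next
      fix fs
      assume fs: "fs \<in> {fs. set fs \<subseteq> fibre n S \<and> length fs = l}"
      then have "hd fs \<in> set fs"
        using assms by (cases fs) auto
      then have "bl n (hd fs) = S"
        using fs by (auto simp: fibre_def)
      then show "fs \<in> {fs \<in> F. bl n (hd fs) = S}"
        using fs S by (auto simp: F_def fibre_def leader_sets_def)
    qed
    then show "card {fs \<in> F. bl n (hd fs) = S} = card {fs. set fs \<subseteq> fibre n S \<and> length fs = l}"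
      by simp
  qed
  also have "\<dots> = (\<Sum>S\<in>leader_sets n r k. card (fibre n S) ^ l)"
    by (simp add: card_lists_length_eq finite_fibre)
  finally show ?thesis
    by (simp add: A_def F_def)
qed

lemma Suc_mem_leader_set_replicate_append:
  "Suc i \<in> leader_set (replicate r True @ \<sigma>) \<longleftrightarrow> i < r \<or> (i - r < length \<sigma> \<and> \<sigma> ! (i - r))"
  by (auto simp: Suc_mem_leader_set nth_append)

lemma leader_set_replicate_append_map:
  assumes "S \<subseteq> {1..n}" "{1..r} \<subseteq> S" "r \<le> n"
  shows "leader_set (replicate r True @ map (\<lambda>i. Suc (r + i) \<in> S) [0..<n - r]) = S"
proof (intro set_eqI)
  fix m
  show "m \<in> leader_set (replicate r True @ map (\<lambda>i. Suc (r + i) \<in> S) [0..<n - r]) \<longleftrightarrow> m \<in> S"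
  proof (cases m)
    case 0
    then show ?thesis
      using assms by (auto simp: leader_set_def)
  next
    case (Suc i)
    then show ?thesis
      using assms by (cases "i < r") (auto simp: Suc_mem_leader_set_replicate_append)
  qed
qed

lemma bij_betw_leader_sets:
  assumes "r \<le> n" "r \<le> k + 1"
  shows "bij_betw (\<lambda>\<sigma>. leader_set (replicate r True @ \<sigma>))
    (bit_lists (n - r) (k + 1 - r)) (leader_sets n r k)"
proof (rule bij_betw_byWitness[where f' = "\<lambda>S. map (\<lambda>i. Suc (r + i) \<in> S) [0..<n - r]"])
  show "\<forall>\<sigma>\<in>bit_lists (n - r) (k + 1 - r).
      map (\<lambda>i. Suc (r + i) \<in> leader_set (replicate r True @ \<sigma>)) [0..<n - r] = \<sigma>"
    by (auto simp: bit_lists_def Suc_mem_leader_set_replicate_append intro: nth_equalityI)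
  show "\<forall>S\<in>leader_sets n r k.
      leader_set (replicate r True @ map (\<lambda>i. Suc (r + i) \<in> S) [0..<n - r]) = S"
    using assms(1) leader_set_replicate_append_map unfolding leader_sets_def by blast
  show "(\<lambda>\<sigma>. leader_set (replicate r True @ \<sigma>)) ` bit_lists (n - r) (k + 1 - r)
      \<subseteq> leader_sets n r k"
  proof clarify
    fix \<sigma>
    assume "\<sigma> \<in> bit_lists (n - r) (k + 1 - r)"
    moreover have "{1..r} \<subseteq> leader_set (replicate r True @ \<sigma>)"
    proof
      fix x
      assume "x \<in> {1..r}"
      then show "x \<in> leader_set (replicate r True @ \<sigma>)"
        using Suc_mem_leader_set_replicate_append[of "x - 1" r \<sigma>] by (cases x) auto
    qed
    ultimately show "leader_set (replicate r True @ \<sigma>) \<in> leader_sets n r k"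
      using leader_set_subset[of "replicate r True @ \<sigma>"] card_leader_set[of "replicate r True @ \<sigma>"]
        assms
      by (auto simp: leader_sets_def bit_lists_def)
  qed
  show "(\<lambda>S. map (\<lambda>i. Suc (r + i) \<in> S) [0..<n - r]) ` leader_sets n r k
      \<subseteq> bit_lists (n - r) (k + 1 - r)"
  proof clarify
    fix S
    assume S: "S \<in> leader_sets n r k"
    have "card S = r + trues (map (\<lambda>i. Suc (r + i) \<in> S) [0..<n - r])"
      using card_leader_set[of "replicate r True @ map (\<lambda>i. Suc (r + i) \<in> S) [0..<n - r]"]
        leader_set_replicate_append_map[of S n r] S assms(1)
      by (simp add: leader_sets_def)
    then show "map (\<lambda>i. Suc (r + i) \<in> S) [0..<n - r] \<in> bit_lists (n - r) (k + 1 - r)"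
      using S by (auto simp: bit_lists_def leader_sets_def)
  qed
qed

lemma A_eq_weight_power_sum:
  assumes "0 < l" "r \<le> n" "r \<le> k + 1"
  shows "A r l n k = (\<Sum>\<sigma>\<in>bit_lists (n - r) (k + 1 - r). weight r 1 \<sigma> ^ l)"
proof -
  have "A r l n k = (\<Sum>\<sigma>\<in>bit_lists (n - r) (k + 1 - r).
      card (fibre n (leader_set (replicate r True @ \<sigma>))) ^ l)"
    using A_eq_sum_fibres[OF assms(1)]
      sum.reindex_bij_betw[OF bij_betw_leader_sets[OF assms(2,3)], of "\<lambda>S. card (fibre n S) ^ l"]
    by simp
  also have "\<dots> = (\<Sum>\<sigma>\<in>bit_lists (n - r) (k + 1 - r). weight r 1 \<sigma> ^ l)"
  proof (rule sum.cong[OF refl])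
    fix \<sigma>
    assume "\<sigma> \<in> bit_lists (n - r) (k + 1 - r)"
    then have "length (replicate r True @ \<sigma>) = n"
      using assms(2) by (simp add: bit_lists_def)
    then show "card (fibre n (leader_set (replicate r True @ \<sigma>))) ^ l = weight r 1 \<sigma> ^ l"
      using card_fibre_leader_set[of "replicate r True @ \<sigma>"]
      by (simp add: weight_append weight_replicate_True)
  qed
  finally show ?thesis .
qed

lemma A_eq_0:
  assumes "0 < l" "k + 1 < r"
  shows "A r l n k = 0"
proof -
  have "card {1..r} \<le> card S" if "S \<in> leader_sets n r k" for S
    using that by (intro card_mono) (auto simp: leader_sets_def intro: finite_subset)
  then have "leader_sets n r k = {}"
    using assms(2) by (fastforce simp: leader_sets_def)
  then show ?thesis
    by (simp add: A_eq_sum_fibres[OF assms(1)])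
qed

section \<open>Moving leaders forward\<close>

definition leader_ratio :: "nat \<Rightarrow> real" where
  "leader_ratio b = (real b + 1) / real b"

definition nonleader_ratio :: "nat \<Rightarrow> real" where
  "nonleader_ratio a = (real a - 1) / real a"

(* flip_ratio b c is what a step gains when it is a leader step with parameter b instead of a
  non-leader step with parameter c. *)
definition flip_ratio :: "nat \<Rightarrow> nat \<Rightarrow> real" where
  "flip_ratio b c = leader_ratio b / nonleader_ratio c"

lemma leader_ratio_nonneg: "0 \<le> leader_ratio b"
  by (simp add: leader_ratio_def)

lemma leader_ratio_antimono: "1 \<le> b \<Longrightarrow> b \<le> b' \<Longrightarrow> leader_ratio b' \<le> leader_ratio b"
  by (simp add: leader_ratio_def divide_simps algebra_simps)

lemma leader_ratio_ge_1: "1 \<le> b \<Longrightarrow> 1 \<le> leader_ratio b"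
  by (simp add: leader_ratio_def)

lemma nonleader_ratio_pos: "2 \<le> a \<Longrightarrow> 0 < nonleader_ratio a"
  by (simp add: nonleader_ratio_def)

lemma nonleader_ratio_nonneg: "0 \<le> nonleader_ratio a"
  by (cases a) (simp_all add: nonleader_ratio_def)

lemma nonleader_ratio_le_1: "nonleader_ratio a \<le> 1"
  by (simp add: nonleader_ratio_def divide_simps)

lemma nonleader_ratio_mono: "1 \<le> a \<Longrightarrow> a \<le> a' \<Longrightarrow> nonleader_ratio a \<le> nonleader_ratio a'"
  by (simp add: nonleader_ratio_def divide_simps algebra_simps)

lemma flip_ratio_nonneg: "0 \<le> flip_ratio b c"
  by (simp add: flip_ratio_def leader_ratio_nonneg nonleader_ratio_nonneg)

lemma flip_ratio_ge_1: "1 \<le> b \<Longrightarrow> 2 \<le> c \<Longrightarrow> 1 \<le> flip_ratio b c"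
  using leader_ratio_ge_1[of b] nonleader_ratio_le_1[of c] nonleader_ratio_pos[of c]
  by (simp add: flip_ratio_def)

lemma flip_ratio_antimono:
  assumes "1 \<le> b" "b \<le> b'" "2 \<le> c" "c \<le> c'"
  shows "flip_ratio b' c' \<le> flip_ratio b c"
  unfolding flip_ratio_def using assms
  by (intro frac_le leader_ratio_nonneg leader_ratio_antimono nonleader_ratio_pos
      nonleader_ratio_mono) auto

fun shift_ratio :: "nat \<Rightarrow> nat \<Rightarrow> bool list \<Rightarrow> real" where
  "shift_ratio a b [] = 1"
| "shift_ratio a b (s # \<sigma>) =
    (if s then leader_ratio b * shift_ratio (Suc a) b \<sigma>
     else nonleader_ratio a * shift_ratio a (Suc b) \<sigma>)"

lemma weight_shift:
  "1 \<le> a \<Longrightarrow> 1 \<le> b \<Longrightarrow>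
    real (weight (a - 1) (Suc b) \<sigma>) = shift_ratio a b \<sigma> * real (weight a b \<sigma>)"
proof (induction \<sigma> arbitrary: a b)
  case (Cons s \<sigma>)
  have "real (weight a (Suc b) \<sigma>) = shift_ratio (Suc a) b \<sigma> * real (weight (Suc a) b \<sigma>)"
    using Cons.IH[of "Suc a" b] Cons.prems by simp
  moreover have "real (weight (a - 1) (Suc (Suc b)) \<sigma>) =
      shift_ratio a (Suc b) \<sigma> * real (weight a (Suc b) \<sigma>)"
    using Cons.IH[of a "Suc b"] Cons.prems by simp
  ultimately show ?case
    using Cons.prems by (auto simp: leader_ratio_def nonleader_ratio_def of_nat_diff field_simps)
qed simp

lemma shift_ratio_snoc:
  "shift_ratio a b (\<sigma> @ [s]) =
    shift_ratio a b \<sigma> * (if s then leader_ratio (b + falses \<sigma>) else nonleader_ratio (a + trues \<sigma>))"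
  by (induction \<sigma> arbitrary: a b) auto

lemma shift_ratio_nonneg: "0 \<le> shift_ratio a b \<sigma>"
  by (induction \<sigma> arbitrary: a b)
    (auto intro!: mult_nonneg_nonneg leader_ratio_nonneg nonleader_ratio_nonneg)

definition dominates :: "bool list \<Rightarrow> bool list \<Rightarrow> bool" where
  "dominates \<sigma>1 \<sigma>2 \<longleftrightarrow> length \<sigma>1 = length \<sigma>2 \<and> (\<forall>s. trues (take s \<sigma>2) \<le> trues (take s \<sigma>1))"

lemma dominates_trues_le: "dominates \<sigma>1 \<sigma>2 \<Longrightarrow> trues \<sigma>2 \<le> trues \<sigma>1"
  unfolding dominates_def by (metis take_all order.refl)

lemma dominates_snocD: "dominates (\<tau>1 @ [s1]) (\<tau>2 @ [s2]) \<Longrightarrow> dominates \<tau>1 \<tau>2"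
  unfolding dominates_def
proof (intro conjI allI; elim conjE)
  assume len: "length (\<tau>1 @ [s1]) = length (\<tau>2 @ [s2])"
    and le: "\<forall>s. trues (take s (\<tau>2 @ [s2])) \<le> trues (take s (\<tau>1 @ [s1]))"
  show "length \<tau>1 = length \<tau>2" using len by simp
  show "trues (take s \<tau>2) \<le> trues (take s \<tau>1)" for s
    using le[rule_format, of "min s (length \<tau>1)"] len by (simp add: min_def split: if_splits)
qed

lemma leader_ratio_le_nonleader_ratio_flip_ratio:
  assumes b: "1 \<le> b" and c: "2 \<le> c"
  shows "leader_ratio (b + D) \<le> nonleader_ratio (c + D) * flip_ratio b c"
proof -
  have "leader_ratio (b + D) * nonleader_ratio c \<le> leader_ratio b * nonleader_ratio (c + D)"
    using b c
    by (intro mult_mono leader_ratio_antimono nonleader_ratio_mono leader_ratio_nonneg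
        nonleader_ratio_nonneg) auto
  then show ?thesis
    using nonleader_ratio_pos[OF c] by (simp add: flip_ratio_def field_simps)
qed

lemma flip_ratio_step:
  assumes b: "1 \<le> b" and c: "2 \<le> c" and D: "\<not> s1 \<and> s2 \<Longrightarrow> 1 \<le> D"
  shows "(if s2 then leader_ratio (b + D) else nonleader_ratio c)
      * flip_ratio (if s1 then b else Suc b) (if s2 then Suc c else c)
          ^ (D + (if s1 then 1 else 0) - (if s2 then 1 else 0))
    \<le> (if s1 then leader_ratio b else nonleader_ratio (c + D)) * flip_ratio b c ^ D"
proof -
  define \<mu> where "\<mu> = flip_ratio b c"
  have \<mu>: "0 \<le> \<mu>" using flip_ratio_ge_1[OF b c] by (simp add: \<mu>_def)
  have pow: "flip_ratio b' c' ^ m \<le> \<mu> ^ m" if "b \<le> b'" "c \<le> c'" for b' c' m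
    using flip_ratio_antimono[OF b that(1) c that(2)] flip_ratio_ge_1[of b' c'] b c that
    by (intro power_mono) (auto simp: \<mu>_def)
  have lead: "leader_ratio (b + D) \<le> leader_ratio b"
    using b by (intro leader_ratio_antimono) auto
  have nonlead: "nonleader_ratio c \<le> nonleader_ratio (c + D)"
    using c by (intro nonleader_ratio_mono) auto
  have cancel: "nonleader_ratio c * \<mu> = leader_ratio b"
    using nonleader_ratio_pos[OF c] by (simp add: \<mu>_def flip_ratio_def)
  consider "s1" "s2" | "s1" "\<not> s2" | "\<not> s1" "s2" | "\<not> s1" "\<not> s2" by blast
  then show ?thesis
  proof cases
    case 1
    then show ?thesis
      using lead pow[of b "Suc c" D]
      by (auto simp: \<mu>_def[symmetric]
          intro!: mult_mono leader_ratio_nonneg zero_le_power flip_ratio_nonneg)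
  next
    case 2
    then show ?thesis
      by (simp add: \<mu>_def[symmetric] cancel mult.assoc[symmetric])
  next
    case 3
    then have "1 \<le> D" using D by simp
    have "leader_ratio (b + D) \<le> nonleader_ratio (c + D) * \<mu>"
      unfolding \<mu>_def by (rule leader_ratio_le_nonleader_ratio_flip_ratio[OF b c])
    then have "leader_ratio (b + D) * flip_ratio (Suc b) (Suc c) ^ (D - 1)
        \<le> (nonleader_ratio (c + D) * \<mu>) * \<mu> ^ (D - 1)"
      using pow[of "Suc b" "Suc c" "D - 1"] \<mu>
      by (intro mult_mono mult_nonneg_nonneg leader_ratio_nonneg nonleader_ratio_nonneg
          zero_le_power flip_ratio_nonneg) auto
    also have "\<dots> = nonleader_ratio (c + D) * \<mu> ^ D"
      using \<open>1 \<le> D\<close> by (simp add: mult.assoc power_eq_if)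
    finally show ?thesis
      using 3 by (simp add: \<mu>_def)
  next
    case 4
    then show ?thesis
      using nonlead pow[of "Suc b" c D]
      by (auto simp: \<mu>_def[symmetric]
          intro!: mult_mono nonleader_ratio_nonneg zero_le_power flip_ratio_nonneg)
  qed
qed

(* The surplus of ones of \<sigma>1 over \<sigma>2 is kept as a reserve of factors flip_ratio \<ge> 1: a one of
  \<sigma>1 against a zero of \<sigma>2 adds a factor, and a zero of \<sigma>1 against a one of \<sigma>2 spends one. *)
lemma shift_ratio_potential:
  assumes x: "2 \<le> x" and y: "1 \<le> y" and "dominates \<sigma>1 \<sigma>2"
  shows "shift_ratio x y \<sigma>2 * flip_ratio (y + falses \<sigma>1) (x + trues \<sigma>2) ^ (trues \<sigma>1 - trues \<sigma>2)
    \<le> shift_ratio x y \<sigma>1"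
  using assms(3)
proof (induction \<sigma>1 arbitrary: \<sigma>2 rule: rev_induct)
  case Nil
  then show ?case by (simp add: dominates_def)
next
  case (snoc s1 \<tau>1)
  obtain \<tau>2 s2 where \<sigma>2: "\<sigma>2 = \<tau>2 @ [s2]"
    using snoc.prems by (cases \<sigma>2 rule: rev_exhaust) (auto simp: dominates_def)
  have dom: "dominates \<tau>1 \<tau>2" and final: "trues (\<tau>2 @ [s2]) \<le> trues (\<tau>1 @ [s1])"
    using dominates_snocD dominates_trues_le snoc.prems unfolding \<sigma>2 by blast+
  have len: "length \<tau>1 = length \<tau>2" and "trues \<tau>2 \<le> trues \<tau>1"
    using dom dominates_trues_le[OF dom] by (simp_all add: dominates_def)
  define b c D where "b = y + falses \<tau>1" and "c = x + trues \<tau>2" and "D = trues \<tau>1 - trues \<tau>2"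
  have trues1: "trues \<tau>1 = trues \<tau>2 + D" and falses2: "falses \<tau>2 = falses \<tau>1 + D"
    using \<open>trues \<tau>2 \<le> trues \<tau>1\<close> len trues_plus_falses[of \<tau>1] trues_plus_falses[of \<tau>2]
    by (simp_all add: D_def)
  define g1 where "g1 = (if s1 then leader_ratio b else nonleader_ratio (c + D))"
  define g2 where "g2 = (if s2 then leader_ratio (b + D) else nonleader_ratio c)"
  have R1: "shift_ratio x y (\<tau>1 @ [s1]) = shift_ratio x y \<tau>1 * g1"
    by (simp add: shift_ratio_snoc g1_def b_def c_def trues1 add.assoc)
  have R2: "shift_ratio x y \<sigma>2 = shift_ratio x y \<tau>2 * g2"
    by (simp add: \<sigma>2 shift_ratio_snoc g2_def b_def c_def falses2 add.assoc)
  have exponent: "trues (\<tau>1 @ [s1]) - trues \<sigma>2 = D + (if s1 then 1 else 0) - (if s2 then 1 else 0)"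
    using final by (auto simp: \<sigma>2 trues1)
  have step: "g2 * flip_ratio (if s1 then b else Suc b) (if s2 then Suc c else c)
        ^ (D + (if s1 then 1 else 0) - (if s2 then 1 else 0))
      \<le> g1 * flip_ratio b c ^ D"
    unfolding g1_def g2_def using x y final
    by (intro flip_ratio_step) (auto simp: b_def c_def \<sigma>2 trues1)
  have IH: "shift_ratio x y \<tau>2 * flip_ratio b c ^ D \<le> shift_ratio x y \<tau>1"
    using snoc.IH[OF dom] by (simp add: b_def c_def D_def)
  have g1: "0 \<le> g1"
    by (simp add: g1_def leader_ratio_nonneg nonleader_ratio_nonneg)
  have args: "y + falses (\<tau>1 @ [s1]) = (if s1 then b else Suc b)"
    "x + trues \<sigma>2 = (if s2 then Suc c else c)"
    by (simp_all add: \<sigma>2 b_def c_def)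
  show ?case
    unfolding R1 R2 exponent args using IH step g1 shift_ratio_nonneg[of x y \<tau>2]
    by (smt (verit) mult.assoc mult.commute mult_left_mono)
qed

lemma weight_exchange:
  assumes x: "2 \<le> x" and y: "1 \<le> y" and dom: "dominates \<sigma>1 \<sigma>2"
  shows "weight x y \<sigma>1 * weight (x - 1) (Suc y) \<sigma>2 \<le> weight (x - 1) (Suc y) \<sigma>1 * weight x y \<sigma>2"
proof -
  have "1 \<le> flip_ratio (y + falses \<sigma>1) (x + trues \<sigma>2) ^ (trues \<sigma>1 - trues \<sigma>2)"
    using x y by (intro one_le_power flip_ratio_ge_1) auto
  then have ratio: "shift_ratio x y \<sigma>2 \<le> shift_ratio x y \<sigma>1"
    using shift_ratio_potential[OF x y dom] shift_ratio_nonneg[of x y \<sigma>2]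
    by (meson mult_le_cancel_left1 order.trans not_le)
  have "real (weight x y \<sigma>1 * weight (x - 1) (Suc y) \<sigma>2)
      = real (weight x y \<sigma>1) * real (weight x y \<sigma>2) * shift_ratio x y \<sigma>2"
    using weight_shift[of x y \<sigma>2] x y by simp
  also have "\<dots> \<le> real (weight x y \<sigma>1) * real (weight x y \<sigma>2) * shift_ratio x y \<sigma>1"
    using ratio by (intro mult_left_mono) auto
  also have "\<dots> = real (weight (x - 1) (Suc y) \<sigma>1 * weight x y \<sigma>2)"
    using weight_shift[of x y \<sigma>1] x y by simp
  finally show ?thesis
    by (simp only: of_nat_le_iff)
qed

section \<open>Exchanging tails\<close>

definition lead :: "bool list \<Rightarrow> bool list \<Rightarrow> nat \<Rightarrow> int" where
  "lead q p s = int (trues (take s q)) - int (trues (take s p))"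

lemma lead_0 [simp]: "lead q p 0 = 0"
  by (simp add: lead_def)

lemma trues_take_Suc:
  "trues (take s xs) \<le> trues (take (Suc s) xs)" "trues (take (Suc s) xs) \<le> Suc (trues (take s xs))"
  by (cases "s < length xs"; simp add: take_Suc_conv_app_nth)+

lemma lead_Suc_le: "lead q p (Suc s) \<le> lead q p s + 1"
  using trues_take_Suc[of s q] trues_take_Suc[of s p] unfolding lead_def by linarith

lemma lead_add:
  "lead q p (t + u)
    = lead q p t + int (trues (take u (drop t q))) - int (trues (take u (drop t p)))"
  by (simp add: lead_def take_add)

definition swap_tails :: "nat \<Rightarrow> bool list \<times> bool list \<Rightarrow> bool list \<times> bool list" where
  "swap_tails t = (\<lambda>(q, p). (take t q @ drop t p, take t p @ drop t q))"

lemma swap_tails_swap_tails: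
  "t \<le> length q \<Longrightarrow> t \<le> length p \<Longrightarrow> swap_tails t (swap_tails t (q, p)) = (q, p)"
  by (simp add: swap_tails_def)

lemma lead_swap_tails_before:
  assumes "t \<le> length q" "t \<le> length p" "swap_tails t (q, p) = (q', p')" "s \<le> t"
  shows "lead q' p' s = lead q p s"
  using assms by (auto simp: swap_tails_def lead_def)

lemma lead_swap_tails_after:
  assumes "t \<le> length q" "t \<le> length p" "swap_tails t (q, p) = (q', p')"
  shows "lead q' p' (t + u) + lead q p (t + u) = 2 * lead q p t"
proof -
  have "take t q' = take t q" "take t p' = take t p" "drop t q' = drop t p" "drop t p' = drop t q"
    using assms by (auto simp: swap_tails_def)
  then have "lead q' p' t = lead q p t"
    by (simp add: lead_def)
  then show ?thesis
    using lead_add[of q' p' t u] lead_add[of q p t u] \<open>drop t q' = drop t p\<close> \<open>drop t p' = drop t q\<close>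
    by simp
qed

lemma trues_swap_tails:
  assumes "swap_tails t (q, p) = (q', p')"
  shows "trues q' + trues p' = trues q + trues p"
proof -
  have "trues q = trues (take t q) + trues (drop t q)"
    "trues p = trues (take t p) + trues (drop t p)"
    by (metis append_take_drop_id count_list_append)+
  then show ?thesis
    using assms by (auto simp: swap_tails_def)
qed

(* After the last position t at which q leads p by at most one the lead is at least 2, and swapping
  the tails at t turns every later lead d into 2 - d \<le> 0.  So t is also the last position at which
  the image pair has a lead of at least one, and the exchange can be undone. *)
definition last_tie :: "bool list \<Rightarrow> bool list \<Rightarrow> nat" where
  "last_tie q p = Max {s. s \<le> length q \<and> lead q p s \<le> 1}"

definition exchange :: "bool list \<times> bool list \<Rightarrow> bool list \<times> bool list" where
  "exchange = (\<lambda>(q, p). swap_tails (last_tie q p) (q, p))"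

lemma last_tie_le_length: "last_tie q p \<le> length q"
  and lead_last_tie_le: "lead q p (last_tie q p) \<le> 1"
proof -
  have "finite {s. s \<le> length q \<and> lead q p s \<le> 1}" "0 \<in> {s. s \<le> length q \<and> lead q p s \<le> 1}"
    by auto
  then show "last_tie q p \<le> length q" "lead q p (last_tie q p) \<le> 1"
    unfolding last_tie_def using Max_in by blast+
qed

context
  fixes q p :: "bool list"
  assumes len: "length p = length q" and excess: "trues p + 2 \<le> trues q"
begin

lemma lead_after_last_tie: "last_tie q p < s \<Longrightarrow> s \<le> length q \<Longrightarrow> 2 \<le> lead q p s"
  using Max_ge[of "{s. s \<le> length q \<and> lead q p s \<le> 1}" s]
  by (fastforce simp: last_tie_def)

lemma last_tie_less: "last_tie q p < length q"
proof -
  have "2 \<le> lead q p (length q)"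
    using len excess by (simp add: lead_def)
  then show ?thesis
    using last_tie_le_length[of q p] lead_last_tie_le[of q p]
    by (cases "last_tie q p = length q") auto
qed

lemma lead_last_tie: "lead q p (last_tie q p) = 1"
  using lead_Suc_le[of q p "last_tie q p"] lead_last_tie_le[of q p]
    lead_after_last_tie[of "Suc (last_tie q p)"] last_tie_less
  by simp

lemma
  assumes "exchange (q, p) = (q', p')"
  shows length_exchange: "length q' = length q" "length p' = length q"
    and trues_exchange: "trues q' = trues p + 1" "trues p' = trues q - 1"
proof -
  define t where "t = last_tie q p"
  have t: "t \<le> length q" "t \<le> length p" and swap: "swap_tails t (q, p) = (q', p')"
    using assms last_tie_le_length[of q p] len by (simp_all add: t_def exchange_def)
  then show lq: "length q' = length q" and lp: "length p' = length q"
    using len by (auto simp: swap_tails_def)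
  have "lead q' p' (t + (length q - t)) + lead q p (t + (length q - t)) = 2 * lead q p t"
    by (rule lead_swap_tails_after[OF t swap])
  then have "int (trues q') - int (trues p') + (int (trues q) - int (trues p)) = 2"
    using t lq lp len lead_last_tie by (simp add: lead_def t_def)
  moreover have "trues q' + trues p' = trues q + trues p"
    by (rule trues_swap_tails[OF swap])
  ultimately show "trues q' = trues p + 1" "trues p' = trues q - 1"
    by linarith+
qed

lemma last_tie_exchange:
  assumes "exchange (q, p) = (q', p')"
  shows "Max {s. s \<le> length q' \<and> 1 \<le> lead q' p' s} = last_tie q p"
proof (rule Max_eqI)
  define t where "t = last_tie q p"
  have t: "t \<le> length q" "t \<le> length p" and swap: "swap_tails t (q, p) = (q', p')"
    using assms last_tie_le_length[of q p] len by (simp_all add: t_def exchange_def)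
  show "finite {s. s \<le> length q' \<and> 1 \<le> lead q' p' s}"
    by simp
  show "t \<in> {s. s \<le> length q' \<and> 1 \<le> lead q' p' s}"
    using lead_swap_tails_before[OF t swap order.refl] lead_last_tie t length_exchange[OF assms]
    by (simp add: t_def)
  show "s \<le> t" if "s \<in> {s. s \<le> length q' \<and> 1 \<le> lead q' p' s}" for s
  proof (rule ccontr)
    assume "\<not> s \<le> t"
    then have "lead q' p' (t + (s - t)) + lead q p (t + (s - t)) = 2" "2 \<le> lead q p s"
      using lead_swap_tails_after[OF t swap, of "s - t"] lead_last_tie lead_after_last_tie[of s]
        that length_exchange[OF assms]
      by (simp_all add: t_def)
    then show False
      using that \<open>\<not> s \<le> t\<close> by simp
  qed
qed

lemma dominates_drop_last_tie: "dominates (drop (last_tie q p) q) (drop (last_tie q p) p)"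
  unfolding dominates_def
proof (intro conjI allI)
  define t where "t = last_tie q p"
  show "length (drop t q) = length (drop t p)"
    using len by simp
  fix u
  define m where "m = min u (length q - t)"
  have "t + m \<le> length q"
    using last_tie_less by (simp add: m_def t_def)
  then have "1 \<le> lead q p (t + m)"
    using lead_last_tie lead_after_last_tie[of "t + m"] by (cases "m = 0") (simp_all add: t_def)
  moreover have "take u (drop t q) = take m (drop t q)" "take u (drop t p) = take m (drop t p)"
    using len by (simp_all add: m_def min_def)
  ultimately show "trues (take u (drop t p)) \<le> trues (take u (drop t q))"
    using lead_add[of q p t m] lead_last_tie by (simp add: t_def)
qed

lemma weight_exchange_mono:
  assumes a: "1 \<le> a" and b: "1 \<le> b" and ex: "exchange (q, p) = (q', p')"
  shows "weight a b q * weight a b p \<le> weight a b q' * weight a b p'"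
proof -
  define t where "t = last_tie q p"
  define x y where "x = a + trues (take t q)" and "y = b + falses (take t q)"
  have q': "q' = take t q @ drop t p" and p': "p' = take t p @ drop t q"
    using ex by (simp_all add: exchange_def swap_tails_def t_def)
  have "trues (take t q) = trues (take t p) + 1"
    using lead_last_tie by (simp add: lead_def t_def)
  moreover have "length (take t q) = length (take t p)"
    using len by simp
  ultimately have x': "a + trues (take t p) = x - 1" and y': "b + falses (take t p) = Suc y"
    using trues_plus_falses[of "take t q"] trues_plus_falses[of "take t p"]
    by (simp_all add: x_def y_def)
  have x2: "2 \<le> x" and y1: "1 \<le> y"
    using a b \<open>trues (take t q) = trues (take t p) + 1\<close> by (simp_all add: x_def y_def)
  have "dominates (drop t q) (drop t p)"
    unfolding t_def by (rule dominates_drop_last_tie)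
  then have tails: "weight x y (drop t q) * weight (x - 1) (Suc y) (drop t p)
      \<le> weight (x - 1) (Suc y) (drop t q) * weight x y (drop t p)"
    by (rule weight_exchange[OF x2 y1])
  have "weight a b q * weight a b p
      = (weight a b (take t q) * weight a b (take t p))
        * (weight x y (drop t q) * weight (x - 1) (Suc y) (drop t p))"
    using weight_append[of a b "take t q" "drop t q"] weight_append[of a b "take t p" "drop t p"]
      x' y'
    by (simp add: x_def y_def)
  also have "\<dots> \<le> (weight a b (take t q) * weight a b (take t p))
        * (weight (x - 1) (Suc y) (drop t q) * weight x y (drop t p))"
    using tails by (rule mult_left_mono) simp
  also have "\<dots> = weight a b q' * weight a b p'"
    using weight_append[of a b "take t q" "drop t p"] weight_append[of a b "take t p" "drop t q"]
      x' y'
    by (simp add: q' p' x_def y_def)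
  finally show ?thesis .
qed

end

lemma inj_on_exchange: "inj_on exchange {(q, p). length p = length q \<and> trues p + 2 \<le> trues q}"
proof (rule inj_onI, clarify)
  fix q1 p1 q2 p2
  assume 1: "length p1 = length q1" "trues p1 + 2 \<le> trues q1"
    and 2: "length p2 = length q2" "trues p2 + 2 \<le> trues q2"
    and eq: "exchange (q1, p1) = exchange (q2, p2)"
  obtain q' p' where ex1: "exchange (q1, p1) = (q', p')"
    by fastforce
  with eq have ex2: "exchange (q2, p2) = (q', p')"
    by simp
  define t where "t = last_tie q1 p1"
  have t2: "t = last_tie q2 p2"
    using last_tie_exchange[OF 1 ex1] last_tie_exchange[OF 2 ex2] by (simp add: t_def)
  have "(q1, p1) = swap_tails t (q', p')"
    using ex1 swap_tails_swap_tails[of t q1 p1] last_tie_le_length[of q1 p1] 1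
    by (simp add: exchange_def t_def)
  also have "\<dots> = (q2, p2)"
    using ex2 swap_tails_swap_tails[of t q2 p2] last_tie_le_length[of q2 p2] 2
    by (simp add: exchange_def t2)
  finally show "q1 = q2 \<and> p1 = p2"
    by simp
qed

lemma sum_le_sum_inj_on:
  fixes f :: "'a \<Rightarrow> 'c::ordered_comm_monoid_add"
  assumes "finite T" "inj_on h S" "h ` S \<subseteq> T"
    and "\<And>x. x \<in> S \<Longrightarrow> f x \<le> g (h x)" "\<And>y. y \<in> T \<Longrightarrow> 0 \<le> g y"
  shows "sum f S \<le> sum g T"
proof -
  have "sum f S \<le> sum (g \<circ> h) S"
    using assms(4) by (intro sum_mono) simp
  also have "\<dots> = sum g (h ` S)"
    by (rule sum.reindex[OF assms(2), symmetric])
  also have "\<dots> \<le> sum g T"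
    using assms(1,3,5) by (intro sum_mono2) auto
  finally show ?thesis .
qed

theorem log_concave_weight_power_sum:
  fixes a b l L j :: nat
  assumes "1 \<le> a" "1 \<le> b"
  defines "W \<equiv> \<lambda>j. \<Sum>\<sigma>\<in>bit_lists L j. weight a b \<sigma> ^ l"
  shows "W j * W (j + 2) \<le> (W (j + 1))\<^sup>2"
proof -
  have "W j * W (j + 2) = W (j + 2) * W j"
    by (rule mult.commute)
  also have "\<dots> = (\<Sum>(q, p)\<in>bit_lists L (j + 2) \<times> bit_lists L j. (weight a b q * weight a b p) ^ l)"
    by (simp add: W_def sum_product sum.cartesian_product power_mult_distrib)
  also have "\<dots> \<le> (\<Sum>(q, p)\<in>bit_lists L (j + 1) \<times> bit_lists L (j + 1).
      (weight a b q * weight a b p) ^ l)"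
  proof (rule sum_le_sum_inj_on)
    show "inj_on exchange (bit_lists L (j + 2) \<times> bit_lists L j)"
      by (rule inj_on_subset[OF inj_on_exchange]) (auto simp: bit_lists_def)
    show "exchange ` (bit_lists L (j + 2) \<times> bit_lists L j)
        \<subseteq> bit_lists L (j + 1) \<times> bit_lists L (j + 1)"
    proof
      fix y
      assume "y \<in> exchange ` (bit_lists L (j + 2) \<times> bit_lists L j)"
      then obtain q p where qp: "q \<in> bit_lists L (j + 2)" "p \<in> bit_lists L j" "y = exchange (q, p)"
        by auto
      obtain q' p' where "exchange (q, p) = (q', p')"
        by (cases "exchange (q, p)")
      with qp show "y \<in> bit_lists L (j + 1) \<times> bit_lists L (j + 1)"
        using length_exchange[of p q q' p'] trues_exchange[of p q q' p']
        by (auto simp: bit_lists_def)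
    qed
    show "(\<lambda>(q, p). (weight a b q * weight a b p) ^ l) x
        \<le> (\<lambda>(q, p). (weight a b q * weight a b p) ^ l) (exchange x)"
      if "x \<in> bit_lists L (j + 2) \<times> bit_lists L j" for x
    proof -
      obtain q p q' p' where "x = (q, p)" "exchange (q, p) = (q', p')"
        by (cases x, cases "exchange x") simp
      then show ?thesis
        using that weight_exchange_mono[of p q a b q' p'] assms(1,2)
        by (auto simp: bit_lists_def intro: power_mono)
    qed
  qed (simp_all add: finite_bit_lists)
  also have "\<dots> = (W (j + 1))\<^sup>2"
    by (simp add: W_def power2_eq_square sum_product sum.cartesian_product power_mult_distrib)
  finally show ?thesis .
qed

theorem mainTheorem9:
  fixes l r n :: nat
  assumes "0 < l" and "0 < r" and "r \<le> n"
  shows "\<forall>k. A r l n k * A r l n (k + 2) \<le> (A r l n (k + 1))\<^sup>2"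
proof
  fix k
  show "A r l n k * A r l n (k + 2) \<le> (A r l n (k + 1))\<^sup>2"
  proof (cases "k + 1 < r")
    case True
    then show ?thesis
      using A_eq_0[OF assms(1)] by simp
  next
    case False
    define j where "j = k + 1 - r"
    have "A r l n (k + i) = (\<Sum>\<sigma>\<in>bit_lists (n - r) (j + i). weight r 1 \<sigma> ^ l)" for i
      using A_eq_weight_power_sum[OF assms(1,3), of "k + i"] False by (simp add: j_def)
    from this[of 0] this[of 1] this[of 2] show ?thesis
      using log_concave_weight_power_sum[of r 1 l "n - r" j] assms(2) by simp
  qed
qed

end
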